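(* Let $L$ be the line graph of the Petersen graph ($15$ vertices). Coloring each pair of distinct vertices of $L$ by $b$, $a$, $c$ according as their distance in $L$ is $1$, $2$, $3$ gives a representation of the relation algebra $31_{65}$, and this representation is minimal: no representation of $31_{65}$ has fewer than $15$ vertices.
   Context: A cycle type is the multiset of colors of the sides of a triangle, e.g. $caa$ = one side $c$, two sides $a$. $31_{65}$ is the finite symmetric integral relation algebra with atoms $1',a,b,c$ whose mandatory diversity cycle types are exactly $aaa, bbb, ccc, abb, baa, caa, abc$ (so $acc, bcc, cbb$ are forbidden). A representation on a set $X$ (its vertices) is a coloring of all 2-element subsets of $X$ by $a,b,c$, each color used, such that: for every mandatory type $\{h,i,j\}$, every edge $\{x,y\}$ colored $h$ (for each choice of $h$ among the type's colors) and each ordering $(i,j)$ of the remaining two colors, some $z$ has $\{x,z\}$ colored $i$, $\{z,y\}$ colored $j$; and no triangle of a forbidden type occurs. *)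

theory Defs
  imports Main "HOL-Library.Multiset"
begin

datatype color = A | B | C

definition mandatory_31_65 :: "color multiset set" where
  "mandatory_31_65 = {{#A,A,A#}, {#B,B,B#}, {#C,C,C#}, {#A,B,B#}, {#B,A,A#}, {#C,A,A#}, {#A,B,C#}}"

definition forbidden_31_65 :: "color multiset set" where
  "forbidden_31_65 = {{#A,C,C#}, {#B,C,C#}, {#C,B,B#}}"

text \<open>A representation of 31_65 on the vertex set X: a colouring of all 2-element subsets
  (given as a symmetric function on pairs of distinct vertices), every colour used,
  every mandatory type witnessed for every edge and ordering, no forbidden triangle.\<close>
definition is_rep_31_65 :: "'a set \<Rightarrow> ('a \<Rightarrow> 'a \<Rightarrow> color) \<Rightarrow> bool" where
  "is_rep_31_65 X col \<longleftrightarrow>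
     (\<forall>x\<in>X. \<forall>y\<in>X. x \<noteq> y \<longrightarrow> col x y = col y x) \<and>
     (\<forall>h. \<exists>x\<in>X. \<exists>y\<in>X. x \<noteq> y \<and> col x y = h) \<and>
     (\<forall>h i j. {#h, i, j#} \<in> mandatory_31_65 \<longrightarrow>
        (\<forall>x\<in>X. \<forall>y\<in>X. x \<noteq> y \<longrightarrow> col x y = h \<longrightarrow>
           (\<exists>z\<in>X. z \<noteq> x \<and> z \<noteq> y \<and> col x z = i \<and> col z y = j))) \<and>
     (\<forall>x\<in>X. \<forall>y\<in>X. \<forall>z\<in>X. x \<noteq> y \<longrightarrow> y \<noteq> z \<longrightarrow> x \<noteq> z \<longrightarrow>
        {#col x y, col y z, col x z#} \<notin> forbidden_31_65)"

inductive walk :: "('v \<Rightarrow> 'v \<Rightarrow> bool) \<Rightarrow> 'v \<Rightarrow> 'v \<Rightarrow> nat \<Rightarrow> bool" for E where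
  walk_nil: "walk E x x 0"
| walk_cons: "E x y \<Longrightarrow> walk E y z n \<Longrightarrow> walk E x z (Suc n)"

definition gdist :: "('v \<Rightarrow> 'v \<Rightarrow> bool) \<Rightarrow> 'v \<Rightarrow> 'v \<Rightarrow> nat" where
  "gdist E x y = (LEAST n. walk E x y n)"

definition petersen_V :: "nat set set" where
  "petersen_V = {S. S \<subseteq> {0..<5} \<and> card S = 2}"

definition petersen_adj :: "nat set \<Rightarrow> nat set \<Rightarrow> bool" where
  "petersen_adj u v \<longleftrightarrow> u \<in> petersen_V \<and> v \<in> petersen_V \<and> u \<inter> v = {}"

definition L_V :: "nat set set set" where
  "L_V = {{u, v} | u v. petersen_adj u v}"

definition L_adj :: "nat set set \<Rightarrow> nat set set \<Rightarrow> bool" where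
  "L_adj e f \<longleftrightarrow> e \<in> L_V \<and> f \<in> L_V \<and> e \<noteq> f \<and> e \<inter> f \<noteq> {}"

definition L_col :: "nat set set \<Rightarrow> nat set set \<Rightarrow> color" where
  "L_col e f = (if gdist L_adj e f = 1 then B else if gdist L_adj e f = 2 then A else C)"

end

theory Submission
  imports Defs
begin

text \<open>
  Two edges of the Petersen graph are at distance 1 in its line graph \<open>L\<close> when they share a
  vertex, at distance 3 when they cover the same four of the five points, and at distance 2
  otherwise: this formula vanishes on the diagonal, changes by at most one along the edges of
  \<open>L\<close> and drops by one along some edge towards any other vertex, so it is the graph distance.
  Hence colour \<open>c\<close> means ``same four points'', an equivalence relation, which excludes the
  forbidden triangles \<open>acc\<close> and \<open>bcc\<close>; and two \<open>b\<close>-steps cover distance at most 2, which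
  excludes \<open>cbb\<close>. Permutations of the five points act transitively on \<open>L\<close> and preserve the
  colouring, so the mandatory triangles only have to be found on the pairs through one vertex,
  which is a finite computation.

  For minimality, take a \<open>c\<close>-edge \<open>xy\<close> and a \<open>ccc\<close> triangle \<open>xyz\<close>. A vertex on a \<open>c\<close>-edge has a
  \<open>b\<close>-neighbour (type \<open>abc\<close>), and then at least four: inside its \<open>b\<close>-neighbourhood every
  vertex needs both a \<open>b\<close>- and an \<open>a\<close>-neighbour (types \<open>bbb\<close> and \<open>abb\<close>), which three vertices
  cannot provide. The \<open>b\<close>-neighbourhoods of \<open>x\<close>, \<open>y\<close>, \<open>z\<close> avoid \<open>x\<close>, \<open>y\<close>, \<open>z\<close> and are pairwise
  disjoint because \<open>cbb\<close> is forbidden, so there are at least \<open>3 + 3 * 4 = 15\<close> vertices.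
\<close>

section \<open>Distance in a graph\<close>

lemma gdist_eqI:
  fixes E :: "'v \<Rightarrow> 'v \<Rightarrow> bool" and d :: "'v \<Rightarrow> 'v \<Rightarrow> nat"
  assumes closed: "\<And>x w. x \<in> S \<Longrightarrow> E x w \<Longrightarrow> w \<in> S"
    and diagonal: "\<And>x. x \<in> S \<Longrightarrow> d x x = 0"
    and Lipschitz: "\<And>x w y. x \<in> S \<Longrightarrow> y \<in> S \<Longrightarrow> E x w \<Longrightarrow> d x y \<le> Suc (d w y)"
    and descent: "\<And>x y. x \<in> S \<Longrightarrow> y \<in> S \<Longrightarrow> x \<noteq> y \<Longrightarrow> \<exists>w. E x w \<and> d x y = Suc (d w y)"
    and "x \<in> S" "y \<in> S"
  shows "gdist E x y = d x y"
proof -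
  have d_le_walk: "d u v \<le> n" if "walk E u v n" "u \<in> S" "v \<in> S" for u v n
    using that
  proof (induction rule: walk.induct)
    case (walk_nil u)
    then show ?case by (simp add: diagonal)
  next
    case (walk_cons u w v n)
    then have "d w v \<le> n" using closed by blast
    then show ?case using Lipschitz[of u v w] walk_cons.hyps(1) walk_cons.prems by simp
  qed
  have walk_of_d: "walk E u y n" if "d u y = n" "u \<in> S" for u n
    using that
  proof (induction n arbitrary: u)
    case 0
    then have "u = y" using descent[of u y] \<open>y \<in> S\<close> by fastforce
    then show ?case by (simp add: walk_nil)
  next
    case (Suc n u)
    then have "u \<noteq> y" using diagonal by fastforce
    then obtain w where "E u w" "d u y = Suc (d w y)" using descent Suc.prems \<open>y \<in> S\<close> by blast
    then show ?case using Suc closed walk_cons by fastforce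
  qed
  show ?thesis
    unfolding gdist_def using assms(5,6) walk_of_d d_le_walk by (intro Least_equality) auto
qed

section \<open>Representations of 31_65\<close>

definition mandatory_witnessed :: "'a set \<Rightarrow> ('a \<Rightarrow> 'a \<Rightarrow> color) \<Rightarrow> 'a \<Rightarrow> 'a \<Rightarrow> bool" where
  "mandatory_witnessed X col x y \<longleftrightarrow>
     (\<forall>i j. {#col x y, i, j#} \<in> mandatory_31_65 \<longrightarrow>
        (\<exists>z\<in>X. z \<noteq> x \<and> z \<noteq> y \<and> col x z = i \<and> col z y = j))"

lemma mandatory_witnessed_cong:
  assumes "\<And>u v. u \<in> X \<Longrightarrow> v \<in> X \<Longrightarrow> col u v = col' u v" "x \<in> X" "y \<in> X"
  shows "mandatory_witnessed X col x y \<longleftrightarrow> mandatory_witnessed X col' x y"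
  using assms by (simp add: mandatory_witnessed_def)

lemma mandatory_witnessed_automorphism:
  assumes "\<sigma> ` X \<subseteq> X" "inj_on \<sigma> X"
    and col_\<sigma>: "\<And>u v. u \<in> X \<Longrightarrow> v \<in> X \<Longrightarrow> col (\<sigma> u) (\<sigma> v) = col u v"
    and "x \<in> X" "y \<in> X" "mandatory_witnessed X col x y"
  shows "mandatory_witnessed X col (\<sigma> x) (\<sigma> y)"
  unfolding mandatory_witnessed_def
proof (intro allI impI)
  fix i j assume "{#col (\<sigma> x) (\<sigma> y), i, j#} \<in> mandatory_31_65"
  then have "{#col x y, i, j#} \<in> mandatory_31_65" using assms by simp
  then obtain z where "z \<in> X" "z \<noteq> x" "z \<noteq> y" "col x z = i" "col z y = j"
    using assms(6) unfolding mandatory_witnessed_def by blast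
  then show "\<exists>z\<in>X. z \<noteq> \<sigma> x \<and> z \<noteq> \<sigma> y \<and> col (\<sigma> x) z = i \<and> col z (\<sigma> y) = j"
    using assms by (intro bexI[of _ "\<sigma> z"]) (auto simp: inj_on_eq_iff)
qed

lemma all_color: "(\<forall>c. P c) \<longleftrightarrow> P A \<and> P B \<and> P C"
  by (metis color.exhaust)

lemma forbidden_31_65_cases:
  assumes "{#p, q, r#} \<in> forbidden_31_65"
  shows "p = C \<and> q = C \<and> r \<noteq> C \<or> q = C \<and> r = C \<and> p \<noteq> C \<or> r = C \<and> p = C \<and> q \<noteq> C \<or>
         p = B \<and> q = B \<and> r = C \<or> q = B \<and> r = B \<and> p = C \<or> r = B \<and> p = B \<and> q = C"
  using assms
  by (cases p; cases q; cases r) (simp_all add: forbidden_31_65_def multiset_eq_iff all_color)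

lemma is_rep_31_65I:
  assumes sym: "\<And>x y. x \<in> X \<Longrightarrow> y \<in> X \<Longrightarrow> x \<noteq> y \<Longrightarrow> col x y = col y x"
    and all_used: "\<And>h. \<exists>x\<in>X. \<exists>y\<in>X. x \<noteq> y \<and> col x y = h"
    and mandatory: "\<And>x y. x \<in> X \<Longrightarrow> y \<in> X \<Longrightarrow> x \<noteq> y \<Longrightarrow> mandatory_witnessed X col x y"
    and C_trans: "\<And>x y z. x \<in> X \<Longrightarrow> y \<in> X \<Longrightarrow> z \<in> X \<Longrightarrow> x \<noteq> y \<Longrightarrow> y \<noteq> z \<Longrightarrow> x \<noteq> z \<Longrightarrow>
      col x y = C \<Longrightarrow> col y z = C \<Longrightarrow> col x z = C"
    and BB_not_C: "\<And>x y z. x \<in> X \<Longrightarrow> y \<in> X \<Longrightarrow> z \<in> X \<Longrightarrow> x \<noteq> y \<Longrightarrow> y \<noteq> z \<Longrightarrow> x \<noteq> z \<Longrightarrow>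
      col x y = B \<Longrightarrow> col y z = B \<Longrightarrow> col x z \<noteq> C"
  shows "is_rep_31_65 X col"
  unfolding is_rep_31_65_def
proof (intro conjI ballI allI impI)
  fix h i j x y
  assume "{#h, i, j#} \<in> mandatory_31_65" "x \<in> X" "y \<in> X" "x \<noteq> y" "col x y = h"
  then show "\<exists>z\<in>X. z \<noteq> x \<and> z \<noteq> y \<and> col x z = i \<and> col z y = j"
    using mandatory[of x y] unfolding mandatory_witnessed_def by blast
next
  fix x y z
  assume xyz: "x \<in> X" "y \<in> X" "z \<in> X" "x \<noteq> y" "y \<noteq> z" "x \<noteq> z"
  show "{#col x y, col y z, col x z#} \<notin> forbidden_31_65"
  proof
    assume "{#col x y, col y z, col x z#} \<in> forbidden_31_65"
    moreover have "col y x = col x y" "col z y = col y z" "col z x = col x z"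
      using sym xyz by metis+
    ultimately show False
      using forbidden_31_65_cases C_trans[of x y z] C_trans[of y z x] C_trans[of y x z]
        BB_not_C[of x y z] BB_not_C[of y z x] BB_not_C[of y x z] xyz
      by metis
  qed
qed (use sym all_used in blast)+

section \<open>The line graph of the Petersen graph\<close>

lemma petersen_V_eq: "petersen_V = {{0,1}, {0,2}, {0,3}, {0,4}, {1,2}, {1,3}, {1,4}, {2,3}, {2,4}, {3,4}}"
proof (intro set_eqI iffI)
  fix u assume "u \<in> petersen_V"
  then have u: "u \<subseteq> {0..<5}" "card u = 2" by (auto simp: petersen_V_def)
  then obtain a b where ab: "u = {a, b}" "a \<noteq> b" by (meson card_2_iff)
  have "a \<in> {0,1,2,3,4}" "b \<in> {0,1,2,3,4}" using u ab by auto
  then show "u \<in> {{0,1}, {0,2}, {0,3}, {0,4}, {1,2}, {1,3}, {1,4}, {2,3}, {2,4}, {3,4}}"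
    using ab(2) unfolding ab(1) by (elim insertE emptyE; simp add: insert_commute)
qed (auto simp: petersen_V_def)

lemma edge_in_L_V: "petersen_adj u v \<Longrightarrow> {u, v} \<in> L_V"
  unfolding L_V_def by blast

lemma L_V_eq: "L_V =
  {{{0,1}, {2,3}}, {{0,1}, {2,4}}, {{0,1}, {3,4}}, {{0,2}, {1,3}}, {{0,2}, {1,4}}, {{0,2}, {3,4}},
   {{0,3}, {1,2}}, {{0,3}, {1,4}}, {{0,3}, {2,4}}, {{0,4}, {1,2}}, {{0,4}, {1,3}}, {{0,4}, {2,3}},
   {{1,2}, {3,4}}, {{1,3}, {2,4}}, {{1,4}, {2,3}}}" (is "_ = ?L")
proof
  show "L_V \<subseteq> ?L"
  proof
    fix e assume "e \<in> L_V"
    then obtain u v where e: "e = {u, v}" "u \<in> petersen_V" "v \<in> petersen_V" "u \<inter> v = {}"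
      unfolding L_V_def petersen_adj_def by blast
    show "e \<in> ?L"
      using e(2-4) unfolding e(1) petersen_V_eq
      by (simp only: insert_iff empty_iff) (elim disjE; simp add: doubleton_eq_iff)
  qed
  show "?L \<subseteq> L_V"
    unfolding insert_subset
    by (intro conjI empty_subsetI; rule edge_in_L_V; simp add: petersen_adj_def petersen_V_eq)
qed

lemma card_L_V: "card L_V = 15"
  unfolding L_V_eq by code_simp

lemma finite_L_V: "finite L_V"
  unfolding L_V_eq by simp

lemma L_V_subset_Pow: "e \<in> L_V \<Longrightarrow> e \<subseteq> Pow {0..<5}"
  unfolding L_V_def petersen_adj_def petersen_V_def by blast

definition line_dist :: "nat set set \<Rightarrow> nat set set \<Rightarrow> nat" where
  "line_dist e f = (if e = f then 0 else if \<Union>e = \<Union>f then 3 else if e \<inter> f \<noteq> {} then 1 else 2)"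

lemma line_dist_eq_0_iff: "line_dist e f = 0 \<longleftrightarrow> e = f"
  by (simp add: line_dist_def)

lemma line_dist_sym: "line_dist e f = line_dist f e"
  unfolding line_dist_def by (auto simp: Int_commute)

lemma line_dist_eq_1D: "line_dist e f = 1 \<Longrightarrow> e \<inter> f \<noteq> {}"
  unfolding line_dist_def by (simp only: split: if_splits) simp_all

lemma line_dist_Lipschitz:
  assumes "e \<in> L_V" "g \<in> L_V" "f \<in> L_V" "e \<inter> g \<noteq> {}"
  shows "line_dist e f \<le> Suc (line_dist g f)"
proof -
  have "\<forall>e\<in>L_V. \<forall>g\<in>L_V. \<forall>f\<in>L_V. e \<inter> g \<noteq> {} \<longrightarrow> line_dist e f \<le> Suc (line_dist g f)"
    unfolding L_V_eq by code_simp
  then show ?thesis using assms by blast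
qed

lemma line_dist_descent:
  assumes "e \<in> L_V" "f \<in> L_V" "e \<noteq> f"
  obtains g where "g \<in> L_V" "e \<noteq> g" "e \<inter> g \<noteq> {}" "line_dist e f = Suc (line_dist g f)"
proof -
  have "\<forall>e\<in>L_V. \<forall>f\<in>L_V. e \<noteq> f \<longrightarrow>
      (\<exists>g\<in>L_V. e \<noteq> g \<and> e \<inter> g \<noteq> {} \<and> line_dist e f = Suc (line_dist g f))"
    unfolding L_V_eq by code_simp
  then show ?thesis using assms that by meson
qed

lemma gdist_L_adj:
  assumes "e \<in> L_V" "f \<in> L_V"
  shows "gdist L_adj e f = line_dist e f"
proof (rule gdist_eqI[where S = L_V and d = line_dist])
  show "w \<in> L_V" if "L_adj e w" for e w
    using that unfolding L_adj_def by blast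
  show "line_dist e e = 0" for e
    by (simp add: line_dist_eq_0_iff)
  show "line_dist e f \<le> Suc (line_dist g f)" if "e \<in> L_V" "f \<in> L_V" "L_adj e g" for e f g
    using that line_dist_Lipschitz unfolding L_adj_def by blast
  show "\<exists>g. L_adj e g \<and> line_dist e f = Suc (line_dist g f)" if "e \<in> L_V" "f \<in> L_V" "e \<noteq> f" for e f
    using line_dist_descent[OF that] unfolding L_adj_def by (metis that(1))
qed (use assms in auto)

definition dist_colour :: "nat \<Rightarrow> color" where
  "dist_colour n = (if n = 1 then B else if n = 2 then A else C)"

lemma L_col_eq: "e \<in> L_V \<Longrightarrow> f \<in> L_V \<Longrightarrow> L_col e f = dist_colour (line_dist e f)"
  by (simp add: L_col_def dist_colour_def gdist_L_adj)

definition relabel :: "(nat \<Rightarrow> nat) \<Rightarrow> nat set set \<Rightarrow> nat set set" where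
  "relabel \<pi> e = image \<pi> ` e"

lemma relabel_in_L_V:
  assumes \<pi>: "inj_on \<pi> {0..<5}" "\<pi> ` {0..<5} \<subseteq> {0..<5}" and "e \<in> L_V"
  shows "relabel \<pi> e \<in> L_V"
proof -
  obtain u v where e: "e = {u, v}" and uv: "u \<in> petersen_V" "v \<in> petersen_V" "u \<inter> v = {}"
    using \<open>e \<in> L_V\<close> unfolding L_V_def petersen_adj_def by blast
  have "\<pi> ` w \<in> petersen_V" if "w \<in> petersen_V" for w
    using that \<pi> card_image[OF inj_on_subset[OF \<pi>(1)]] unfolding petersen_V_def by auto
  moreover have "\<pi> ` u \<inter> \<pi> ` v = {}"
    using uv \<pi>(1) inj_on_image_Int[of \<pi> "{0..<5}" u v] unfolding petersen_V_def by auto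
  ultimately have "petersen_adj (\<pi> ` u) (\<pi> ` v)"
    using uv unfolding petersen_adj_def by blast
  then show ?thesis
    unfolding e relabel_def by (simp add: edge_in_L_V)
qed

lemma line_dist_relabel:
  assumes \<pi>: "inj_on \<pi> {0..<5}" and "e \<in> L_V" "f \<in> L_V"
  shows "line_dist (relabel \<pi> e) (relabel \<pi> f) = line_dist e f"
proof -
  have inj: "inj_on (image \<pi>) (Pow {0..<5})"
    using \<pi> by (rule inj_on_image_Pow)
  have sub: "e \<subseteq> Pow {0..<5}" "f \<subseteq> Pow {0..<5}"
    using assms L_V_subset_Pow by auto
  have eq: "relabel \<pi> e = relabel \<pi> f \<longleftrightarrow> e = f"
    unfolding relabel_def using inj_on_image_eq_iff[OF inj sub] .
  have Union_relabel: "\<Union>(relabel \<pi> g) = \<pi> ` \<Union>g" for g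
    unfolding relabel_def by (simp add: image_Union)
  have "\<Union>e \<subseteq> {0..<5}" "\<Union>f \<subseteq> {0..<5}"
    using sub by auto
  then have Union_eq: "\<Union>(relabel \<pi> e) = \<Union>(relabel \<pi> f) \<longleftrightarrow> \<Union>e = \<Union>f"
    unfolding Union_relabel by (rule inj_on_image_eq_iff[OF \<pi>])
  have disjoint: "relabel \<pi> e \<inter> relabel \<pi> f = {} \<longleftrightarrow> e \<inter> f = {}"
    using inj_on_image_Int[OF inj sub] unfolding relabel_def by (metis image_is_empty)
  show ?thesis
    unfolding line_dist_def eq Union_eq disjoint ..
qed

abbreviation base_edge :: "nat set set" where
  "base_edge \<equiv> {{0,1}, {2,3}}"

lemma L_V_relabel_transitive:
  assumes "e \<in> L_V"
  obtains \<pi> where "inj_on \<pi> {0..<5}" "\<pi> ` {0..<5} \<subseteq> {0..<5}" "relabel \<pi> base_edge = e"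
proof -
  obtain u v where e: "e = {u, v}" and uv: "u \<in> petersen_V" "v \<in> petersen_V" "u \<inter> v = {}"
    using assms unfolding L_V_def petersen_adj_def by blast
  have "card u = 2" "card v = 2"
    using uv(1,2) by (simp_all add: petersen_V_def)
  then obtain a b c d where u: "u = {a, b}" "a \<noteq> b" and v: "v = {c, d}" "c \<noteq> d"
    by (meson card_2_iff)
  have abcd: "{a, b, c, d} \<subseteq> {0..<5}" "a \<noteq> c" "a \<noteq> d" "b \<noteq> c" "b \<noteq> d"
    using uv unfolding u v petersen_V_def by auto
  have "card {a, b, c, d} < card {0..<5::nat}"
    using u(2) v(2) abcd(2-5) by simp
  then have "\<not> {0..<5} \<subseteq> {a, b, c, d}"
    using card_mono[of "{a, b, c, d}" "{0..<5::nat}"] by auto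
  then obtain p where p: "p \<in> {0..<5}" "p \<notin> {a, b, c, d}"
    by blast
  define \<pi> where "\<pi> n = (if n = 0 then a else if n = 1 then b else if n = 2 then c else if n = 3 then d else p)"
    for n :: nat
  have five: "{0..<5::nat} = {0, 1, 2, 3, 4}"
    by auto
  show thesis
  proof
    show "inj_on \<pi> {0..<5}"
      using u(2) v(2) abcd(2-5) p(2) unfolding five inj_on_def \<pi>_def by auto
    show "\<pi> ` {0..<5} \<subseteq> {0..<5}"
      using abcd(1) p(1) unfolding five \<pi>_def by simp
    show "relabel \<pi> base_edge = e"
      unfolding relabel_def e u v \<pi>_def by (simp add: insert_commute)
  qed
qed

lemma mandatory_witnessed_at_base_edge:
  assumes "f \<in> L_V" "f \<noteq> base_edge"
  shows "mandatory_witnessed L_V L_col base_edge f"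
proof -
  have base: "base_edge \<in> L_V"
    by (simp add: L_V_eq)
  have "\<forall>f\<in>L_V. f \<noteq> base_edge \<longrightarrow>
      mandatory_witnessed L_V (\<lambda>e f. dist_colour (line_dist e f)) base_edge f"
    unfolding mandatory_witnessed_def mandatory_31_65_def all_color L_V_eq by code_simp
  moreover have "mandatory_witnessed L_V L_col base_edge f \<longleftrightarrow>
      mandatory_witnessed L_V (\<lambda>e f. dist_colour (line_dist e f)) base_edge f"
    using base assms(1) by (intro mandatory_witnessed_cong) (simp_all add: L_col_eq)
  ultimately show ?thesis
    using assms by blast
qed

lemma L_col_mandatory_witnessed:
  assumes "e \<in> L_V" "f \<in> L_V" "e \<noteq> f"
  shows "mandatory_witnessed L_V L_col e f"
proof -
  obtain \<pi> where \<pi>: "inj_on \<pi> {0..<5}" "\<pi> ` {0..<5} \<subseteq> {0..<5}"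
    and e: "relabel \<pi> base_edge = e"
    using L_V_relabel_transitive[OF assms(1)] .
  have into: "relabel \<pi> ` L_V \<subseteq> L_V"
    using relabel_in_L_V[OF \<pi>] by blast
  have col: "L_col (relabel \<pi> u) (relabel \<pi> v) = L_col u v" if "u \<in> L_V" "v \<in> L_V" for u v
    using that into by (simp add: L_col_eq line_dist_relabel[OF \<pi>(1)] relabel_in_L_V[OF \<pi>])
  have inj: "inj_on (relabel \<pi>) L_V"
  proof (rule inj_onI)
    fix u v assume "u \<in> L_V" "v \<in> L_V" "relabel \<pi> u = relabel \<pi> v"
    then show "u = v"
      using line_dist_relabel[OF \<pi>(1), of u v] line_dist_eq_0_iff by metis
  qed
  have "relabel \<pi> ` L_V = L_V"
    by (rule endo_inj_surj[OF finite_L_V into inj])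
  then obtain f' where f': "f' \<in> L_V" "f = relabel \<pi> f'"
    using assms(2) by blast
  have base: "base_edge \<in> L_V"
    by (simp add: L_V_eq)
  have "mandatory_witnessed L_V L_col base_edge f'"
    using mandatory_witnessed_at_base_edge f' e assms(3) by blast
  then show ?thesis
    using mandatory_witnessed_automorphism[where \<sigma> = "relabel \<pi>" and col = L_col, OF into inj col base f'(1)] e f' by simp
qed

lemma dist_colour_eq_B_iff: "dist_colour n = B \<longleftrightarrow> n = 1"
  by (simp add: dist_colour_def)

lemma dist_colour_eq_C_iff: "dist_colour n = C \<longleftrightarrow> n \<noteq> 1 \<and> n \<noteq> 2"
  by (simp add: dist_colour_def)

lemma L_col_C_iff: "e \<in> L_V \<Longrightarrow> f \<in> L_V \<Longrightarrow> e \<noteq> f \<Longrightarrow> L_col e f = C \<longleftrightarrow> \<Union>e = \<Union>f"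
  by (simp add: L_col_eq dist_colour_eq_C_iff line_dist_def)

lemma is_rep_L_col: "is_rep_31_65 L_V L_col"
proof (rule is_rep_31_65I)
  show "L_col e f = L_col f e" if "e \<in> L_V" "f \<in> L_V" for e f
    using that by (simp add: L_col_eq line_dist_sym)
  have "\<forall>h. \<exists>e\<in>L_V. \<exists>f\<in>L_V. e \<noteq> f \<and> dist_colour (line_dist e f) = h"
    unfolding all_color L_V_eq by code_simp
  then show "\<exists>e\<in>L_V. \<exists>f\<in>L_V. e \<noteq> f \<and> L_col e f = h" for h
    by (simp add: L_col_eq)
  show "mandatory_witnessed L_V L_col e f" if "e \<in> L_V" "f \<in> L_V" "e \<noteq> f" for e f
    using that by (rule L_col_mandatory_witnessed)
  show "L_col e g = C"
    if "e \<in> L_V" "f \<in> L_V" "g \<in> L_V" "e \<noteq> f" "f \<noteq> g" "e \<noteq> g" "L_col e f = C" "L_col f g = C"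
    for e f g
    using that by (simp add: L_col_C_iff)
  show "L_col e g \<noteq> C"
    if "e \<in> L_V" "f \<in> L_V" "g \<in> L_V" "e \<noteq> f" "f \<noteq> g" "e \<noteq> g" "L_col e f = B" "L_col f g = B"
    for e f g
  proof -
    have "line_dist e f = 1" "line_dist f g = 1"
      using that by (simp_all add: L_col_eq dist_colour_eq_B_iff)
    have "e \<inter> f \<noteq> {}"
      using \<open>line_dist e f = 1\<close> by (rule line_dist_eq_1D)
    then have "line_dist e g \<le> 2"
      using line_dist_Lipschitz[of e f g] that(1-3) \<open>line_dist f g = 1\<close> by simp
    moreover have "line_dist e g \<noteq> 0"
      using \<open>e \<noteq> g\<close> by (simp add: line_dist_eq_0_iff)
    ultimately show ?thesis
      using that(1,3) by (auto simp: L_col_eq dist_colour_eq_C_iff)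
  qed
qed

section \<open>No smaller representation\<close>

lemma is_rep_31_65_sym:
  "is_rep_31_65 X col \<Longrightarrow> x \<in> X \<Longrightarrow> y \<in> X \<Longrightarrow> x \<noteq> y \<Longrightarrow> col x y = col y x"
  unfolding is_rep_31_65_def by blast

lemma is_rep_31_65_mandatory:
  "is_rep_31_65 X col \<Longrightarrow> {#col x y, i, j#} \<in> mandatory_31_65 \<Longrightarrow> x \<in> X \<Longrightarrow> y \<in> X \<Longrightarrow> x \<noteq> y \<Longrightarrow>
     \<exists>z\<in>X. z \<noteq> x \<and> z \<noteq> y \<and> col x z = i \<and> col z y = j"
  unfolding is_rep_31_65_def by blast

lemma is_rep_31_65_not_forbidden:
  "is_rep_31_65 X col \<Longrightarrow> x \<in> X \<Longrightarrow> y \<in> X \<Longrightarrow> z \<in> X \<Longrightarrow> x \<noteq> y \<Longrightarrow> y \<noteq> z \<Longrightarrow> x \<noteq> z \<Longrightarrow>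
     {#col x y, col y z, col x z#} \<notin> forbidden_31_65"
  unfolding is_rep_31_65_def by blast

definition b_neighbours :: "'a set \<Rightarrow> ('a \<Rightarrow> 'a \<Rightarrow> color) \<Rightarrow> 'a \<Rightarrow> 'a set" where
  "b_neighbours X col x = {w \<in> X. w \<noteq> x \<and> col x w = B}"

lemma card_b_neighbours_ge_4:
  assumes rep: "is_rep_31_65 X col" and "finite X" "x \<in> X" "y \<in> b_neighbours X col x"
  shows "4 \<le> card (b_neighbours X col x)"
proof (rule ccontr)
  assume small: "\<not> 4 \<le> card (b_neighbours X col x)"
  define N where "N = b_neighbours X col x"
  have sym: "col u v = col v u" if "u \<in> N" "v \<in> N" "u \<noteq> v" for u v
    using that is_rep_31_65_sym[OF rep] unfolding N_def b_neighbours_def by blast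
  have neighbour_in_N: "\<exists>w\<in>N. w \<noteq> v \<and> col w v = c" if v: "v \<in> N" and c: "c \<noteq> C" for v c
  proof -
    have "{#col x v, B, c#} \<in> mandatory_31_65"
      using v c unfolding N_def b_neighbours_def
      by (cases c) (auto simp: mandatory_31_65_def add_mset_commute)
    then obtain w where "w \<in> X" "w \<noteq> x" "w \<noteq> v" "col x w = B" "col w v = c"
      using is_rep_31_65_mandatory[OF rep] v \<open>x \<in> X\<close> unfolding N_def b_neighbours_def by blast
    then show ?thesis
      unfolding N_def b_neighbours_def by blast
  qed
  have y: "y \<in> N"
    using assms(4) unfolding N_def .
  obtain z1 where z1: "z1 \<in> N" "z1 \<noteq> y" "col z1 y = B"
    using neighbour_in_N[OF y, of B] by blast
  obtain z2 where z2: "z2 \<in> N" "z2 \<noteq> y" "col z2 y = A"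
    using neighbour_in_N[OF y, of A] by blast
  have "z1 \<noteq> z2"
    using z1 z2 by auto
  then have "card N \<le> card {y, z1, z2}"
    using small z1 z2 unfolding N_def by (simp add: card_insert_if)
  moreover have "finite N"
    using \<open>finite X\<close> unfolding N_def b_neighbours_def by simp
  moreover have "{y, z1, z2} \<subseteq> N"
    using y z1 z2 by auto
  ultimately have N: "N = {y, z1, z2}"
    using card_seteq by blast
  obtain w where "w \<in> N" "w \<noteq> z2" "col w z2 = B"
    using neighbour_in_N[of z2 B] z2 by blast
  then have z12: "col z1 z2 = B"
    using N y z2 sym[of y z2] by auto
  obtain u where "u \<in> N" "u \<noteq> z1" "col u z1 = A"
    using neighbour_in_N[of z1 A] z1 by blast
  then show False
    using N y z1 z12 sym[of y z1] sym[of z2 z1] by auto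
qed

lemma b_neighbours_disjoint:
  assumes rep: "is_rep_31_65 X col" and "x \<in> X" "y \<in> X" "x \<noteq> y" "col x y = C"
  shows "b_neighbours X col x \<inter> b_neighbours X col y = {}"
proof (rule equals0I)
  fix w assume "w \<in> b_neighbours X col x \<inter> b_neighbours X col y"
  then have w: "w \<in> X" "w \<noteq> x" "w \<noteq> y" "col x w = B" "col w y = B"
    using is_rep_31_65_sym[OF rep, of y w] assms unfolding b_neighbours_def by auto
  have "{#col x w, col w y, col x y#} = {#B, B, C#}"
    using w assms by simp
  moreover have "{#B, B, C#} \<in> forbidden_31_65"
    by (simp add: forbidden_31_65_def add_mset_commute)
  ultimately show False
    using is_rep_31_65_not_forbidden[OF rep, of x w y] w assms by simp
qed

lemma b_neighbours_nonempty:
  assumes rep: "is_rep_31_65 X col" and "x \<in> X" "y \<in> X" "x \<noteq> y" "col x y = C"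
  shows "b_neighbours X col x \<noteq> {}"
proof -
  have "{#col x y, B, A#} \<in> mandatory_31_65"
    using assms by (simp add: mandatory_31_65_def add_mset_commute)
  then show ?thesis
    using is_rep_31_65_mandatory[OF rep] assms unfolding b_neighbours_def by blast
qed

lemma is_rep_31_65_card_ge_15:
  assumes rep: "is_rep_31_65 X col" and "finite X"
  shows "15 \<le> card X"
proof -
  let ?N = "b_neighbours X col"
  obtain x y where xy: "x \<in> X" "y \<in> X" "x \<noteq> y" "col x y = C"
    using rep unfolding is_rep_31_65_def by blast
  have "{#col x y, C, C#} \<in> mandatory_31_65"
    using xy by (simp add: mandatory_31_65_def)
  then obtain z where z: "z \<in> X" "z \<noteq> x" "z \<noteq> y" "col x z = C" "col z y = C"
    using is_rep_31_65_mandatory[OF rep] xy by blast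
  have "col y x = C" "col z x = C" "col y z = C"
    using xy z is_rep_31_65_sym[OF rep] by metis+
  then have C_edge: "col u v = C" if "u \<in> {x, y, z}" "v \<in> {x, y, z}" "u \<noteq> v" for u v
    using that xy z by auto
  have XYZ: "{x, y, z} \<subseteq> X"
    using xy z by auto
  have card_N: "4 \<le> card (?N u)" if u: "u \<in> {x, y, z}" for u
  proof -
    obtain v where v: "v \<in> {x, y, z}" "v \<noteq> u"
      using xy(3) by blast
    have "?N u \<noteq> {}"
      by (rule b_neighbours_nonempty[OF rep, of u v]) (use u v XYZ C_edge in auto)
    then obtain w where "w \<in> ?N u"
      by blast
    then show ?thesis
      using card_b_neighbours_ge_4[OF rep \<open>finite X\<close>, of u w] u XYZ by blast
  qed
  have disjoint: "?N u \<inter> ?N v = {}" if "u \<in> {x, y, z}" "v \<in> {x, y, z}" "u \<noteq> v" for u v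
    by (rule b_neighbours_disjoint[OF rep]) (use that XYZ C_edge in auto)
  have "w \<notin> {x, y, z}" if "u \<in> {x, y, z}" "w \<in> ?N u" for u w
    using that C_edge[of u w] unfolding b_neighbours_def by auto
  then have outside: "{x, y, z} \<inter> (?N x \<union> ?N y \<union> ?N z) = {}"
    by blast
  have fin: "finite (?N u)" for u
    using \<open>finite X\<close> unfolding b_neighbours_def by simp
  have "15 \<le> card {x, y, z} + (card (?N x) + card (?N y) + card (?N z))"
    using card_N[of x] card_N[of y] card_N[of z] xy z by simp
  also have "\<dots> = card ({x, y, z} \<union> (?N x \<union> ?N y \<union> ?N z))"
    using outside disjoint fin xy z
    by (simp add: card_Un_disjoint Int_Un_distrib Int_Un_distrib2)
  also have "\<dots> \<le> card X"
    using XYZ \<open>finite X\<close> by (intro card_mono) (auto simp: b_neighbours_def)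
  finally show ?thesis .
qed

theorem mainTheorem11:
  shows "card L_V = 15 \<and>
    (\<forall>e\<in>L_V. \<forall>f\<in>L_V. e \<noteq> f \<longrightarrow> gdist L_adj e f \<in> {1, 2, 3}) \<and>
    is_rep_31_65 L_V L_col \<and>
    (\<forall>(X :: 'a set) col. is_rep_31_65 X col \<longrightarrow> infinite X \<or> 15 \<le> card X)"
proof (intro conjI allI impI)
  show "card L_V = 15"
    by (rule card_L_V)
  show "\<forall>e\<in>L_V. \<forall>f\<in>L_V. e \<noteq> f \<longrightarrow> gdist L_adj e f \<in> {1, 2, 3}"
    by (simp add: gdist_L_adj line_dist_def)
  show "is_rep_31_65 L_V L_col"
    by (rule is_rep_L_col)
  show "infinite X \<or> 15 \<le> card X" if "is_rep_31_65 X col" for X :: "'a set" and col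
    using is_rep_31_65_card_ge_15[OF that] by blast
qed

end
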